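(* Let $S$ and $T$ be Polish spaces, $\Delta_\infty=\{(w_j)_{j\ge1}:w_j\ge0,\ \sum_jw_j=1\}$, and let $G$ be a probability kernel from $S$ into $T$ such that $G(\cdot\mid s_n)\to G(\cdot\mid s)$ weakly whenever $s_n\to s$ in $S$. Then the mapping $[(s_1,s_2,\dots),(w_1,w_2,\dots)]\mapsto\sum_{j\ge1}w_jG(\cdot\mid s_j)$ from $S^\infty\times\Delta_\infty$ (product topology) into the space $\mathcal{P}(T)$ of probability measures on $T$ (weak topology) is continuous. *)

theory Defs
  imports "HOL-Analysis.Analysis" "HOL-Probability.Probability"
begin

definition prob_measures :: "('b::topological_space) measure set" where
  "prob_measures = {M. sets M = sets borel \<and> prob_space M}"

definition bcontinuous :: "('b::topological_space \<Rightarrow> real) \<Rightarrow> bool" where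
  "bcontinuous f \<longleftrightarrow> continuous_on UNIV f \<and> bounded (range f)"

definition weak_conv_to :: "(nat \<Rightarrow> ('b::topological_space) measure) \<Rightarrow> 'b measure \<Rightarrow> bool" where
  "weak_conv_to Ms M \<longleftrightarrow>
     (\<forall>f. bcontinuous f \<longrightarrow> (\<lambda>n. \<integral>x. f x \<partial>Ms n) \<longlonglongrightarrow> (\<integral>x. f x \<partial>M))"

definition weak_topology :: "('b::topological_space) measure topology" where
  "weak_topology = topology_generated_by
     {{M \<in> prob_measures. (\<integral>x. f x \<partial>M) \<in> U} | f U. bcontinuous f \<and> open U}"

text \<open>The infinite simplex \<Delta>_\<infinity> (indexed from 0).\<close>
definition simplex_inf :: "(nat \<Rightarrow> real) set" where
  "simplex_inf = {w. (\<forall>j. 0 \<le> w j) \<and> w sums 1}"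

definition mixture :: "('a \<Rightarrow> ('b::topological_space) measure) \<Rightarrow> (nat \<Rightarrow> 'a) \<Rightarrow> (nat \<Rightarrow> real) \<Rightarrow> 'b measure" where
  "mixture G s w = measure_of UNIV (sets borel)
     (\<lambda>A. \<Sum>j. ennreal (w j) * emeasure (G (s j)) A)"

end

theory Submission
  imports Defs
begin

(* Against a bounded continuous test function f, the mixture integrates to the series
   \<Sum>j w_j \<phi>(s_j) with \<phi>(t) = \<integral> f dG(.|t), and \<phi> is bounded and continuous by the hypothesis
   on G. As the weak topology is generated by such integrals, it suffices that the series is
   continuous in (s, w). For a bound B of |\<phi>| and \<Sum> w_j = 1, both B + \<Sum>j w_j \<phi>(s_j) and
   B - \<Sum>j w_j \<phi>(s_j) are series of nonnegative continuous functions, hence lower semicontinuous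
   as suprema of their partial sums; so the series is both lower and upper semicontinuous. *)

lemma continuous_map_into_topology_generated_by:
  assumes "f \<in> topspace X \<rightarrow> \<Union>\<S>"
    and "\<And>U. U \<in> \<S> \<Longrightarrow> openin X {x \<in> topspace X. f x \<in> U}"
  shows "continuous_map X (topology_generated_by \<S>) f"
proof -
  let ?pre = "\<lambda>U. {x \<in> topspace X. f x \<in> U}"
  have top: "istopology (\<lambda>U. openin X (?pre U))"
    unfolding istopology_def
  proof (intro conjI allI impI)
    fix U V assume "openin X (?pre U)" "openin X (?pre V)"
    moreover have "?pre (U \<inter> V) = ?pre U \<inter> ?pre V" by auto
    ultimately show "openin X (?pre (U \<inter> V))" by (simp add: openin_Int)
  next
    fix \<K> assume "\<forall>K\<in>\<K>. openin X (?pre K)"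
    moreover have "?pre (\<Union>\<K>) = (\<Union>K\<in>\<K>. ?pre K)" by auto
    ultimately show "openin X (?pre (\<Union>\<K>))" by (auto intro!: openin_Union)
  qed
  have "openin X (?pre U)" if "openin (topology_generated_by \<S>) U" for U
    using generate_topology_on_coarsest[OF top assms(2) openin_topology_generated_by[OF that]] .
  then show ?thesis
    using assms(1) by (auto simp: continuous_map_def)
qed

definition weak_subbasis :: "('b::topological_space) measure set set" where
  "weak_subbasis = {{M \<in> prob_measures. (\<integral>x. f x \<partial>M) \<in> U} | f U. bcontinuous f \<and> open U}"

lemma Union_weak_subbasis: "\<Union>weak_subbasis = prob_measures"
proof -
  have "prob_measures \<in> weak_subbasis"
    unfolding weak_subbasis_def
    by (intro CollectI exI[of _ "\<lambda>_. 0"] exI[of _ UNIV]) (auto simp: bcontinuous_def)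
  then show ?thesis
    by (intro equalityI Union_least Union_upper) (auto simp: weak_subbasis_def)
qed

lemma continuous_map_weak_topologyI:
  fixes m :: "'a \<Rightarrow> 'b::topological_space measure"
  assumes into: "\<And>x. x \<in> topspace X \<Longrightarrow> m x \<in> prob_measures"
    and integrals: "\<And>f. bcontinuous f \<Longrightarrow> continuous_map X euclideanreal (\<lambda>x. \<integral>y. f y \<partial>m x)"
  shows "continuous_map X weak_topology m"
  unfolding weak_topology_def weak_subbasis_def[symmetric]
proof (rule continuous_map_into_topology_generated_by)
  show "m \<in> topspace X \<rightarrow> \<Union>weak_subbasis"
    using into by (simp add: Union_weak_subbasis)
next
  fix U :: "'b measure set" assume "U \<in> weak_subbasis"
  then obtain f :: "'b \<Rightarrow> real" and V
    where U: "U = {M \<in> prob_measures. (\<integral>x. f x \<partial>M) \<in> V}" and "bcontinuous f" "open V"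
    unfolding weak_subbasis_def by blast
  then have "openin X {x \<in> topspace X. (\<integral>y. f y \<partial>m x) \<in> V}"
    using integrals openin_continuous_map_preimage by fastforce
  moreover have "{x \<in> topspace X. m x \<in> U} = {x \<in> topspace X. (\<integral>y. f y \<partial>m x) \<in> V}"
    using U into by auto
  ultimately show "openin X {x \<in> topspace X. m x \<in> U}" by simp
qed

lemma openin_less_suminf:
  fixes g :: "nat \<Rightarrow> 'x \<Rightarrow> real"
  assumes cont: "\<And>j. continuous_map X euclideanreal (g j)"
    and nonneg: "\<And>j x. x \<in> topspace X \<Longrightarrow> 0 \<le> g j x"
    and summable: "\<And>x. x \<in> topspace X \<Longrightarrow> summable (\<lambda>j. g j x)"
  shows "openin X {x \<in> topspace X. a < (\<Sum>j. g j x)}"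
proof -
  have "{x \<in> topspace X. a < (\<Sum>j. g j x)} = (\<Union>N. {x \<in> topspace X. a < (\<Sum>j<N. g j x)})"
  proof (intro set_eqI iffI)
    fix x assume x: "x \<in> {x \<in> topspace X. a < (\<Sum>j. g j x)}"
    then have "(\<lambda>N. \<Sum>j<N. g j x) \<longlonglongrightarrow> (\<Sum>j. g j x)"
      using summable summable_LIMSEQ by blast
    then have "eventually (\<lambda>N. a < (\<Sum>j<N. g j x)) sequentially"
      using x order_tendstoD(1) by blast
    then obtain N where "a < (\<Sum>j<N. g j x)"
      using eventually_sequentially by auto
    then show "x \<in> (\<Union>N. {x \<in> topspace X. a < (\<Sum>j<N. g j x)})"
      using x by auto
  next
    fix x assume "x \<in> (\<Union>N. {x \<in> topspace X. a < (\<Sum>j<N. g j x)})"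
    then obtain N where x: "x \<in> topspace X" and "a < (\<Sum>j<N. g j x)" by auto
    moreover have "(\<Sum>j<N. g j x) \<le> (\<Sum>j. g j x)"
      using x nonneg summable by (intro sum_le_suminf) auto
    ultimately show "x \<in> {x \<in> topspace X. a < (\<Sum>j. g j x)}" by auto
  qed
  moreover have "openin X {x \<in> topspace X. a < (\<Sum>j<N. g j x)}" for N
    using openin_continuous_map_preimage[OF continuous_map_sum[of "{..<N}" X "\<lambda>x j. g j x"], of "{a<..}"]
    using cont by auto
  ultimately show ?thesis by auto
qed

abbreviation seq_simplex_topology :: "'a topology \<Rightarrow> ((nat \<Rightarrow> 'a) \<times> (nat \<Rightarrow> real)) topology" where
  "seq_simplex_topology Y \<equiv>
     prod_topology (product_topology (\<lambda>_. Y) UNIV) (subtopology (product_topology (\<lambda>_. euclideanreal) UNIV) simplex_inf)"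

lemma summable_abs_weighted:
  assumes w: "w \<in> simplex_inf" and bound: "\<And>j. \<bar>a j\<bar> \<le> B"
  shows "summable (\<lambda>j. \<bar>w j * a j\<bar>)"
proof (rule summable_comparison_test)
  have "\<bar>w j * a j\<bar> \<le> B * w j" for j
  proof -
    have "0 \<le> w j" using w by (simp add: simplex_inf_def)
    then show ?thesis
      using mult_left_mono[OF bound[of j] \<open>0 \<le> w j\<close>] by (simp add: abs_mult mult.commute)
  qed
  then show "\<exists>N. \<forall>j\<ge>N. norm \<bar>w j * a j\<bar> \<le> B * w j" by auto
  show "summable (\<lambda>j. B * w j)"
    using w by (intro summable_mult) (auto simp: simplex_inf_def sums_summable)
qed

lemma suminf_weighted_affine:
  assumes w: "w \<in> simplex_inf" and bound: "\<And>j. \<bar>a j\<bar> \<le> B"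
  shows "(\<Sum>j. w j * (c + d * a j)) = c + d * (\<Sum>j. w j * a j)"
proof -
  have "w sums 1" using w by (simp add: simplex_inf_def)
  moreover have "summable (\<lambda>j. w j * a j)"
    using summable_abs_weighted[OF w bound] by (rule summable_rabs_cancel)
  ultimately have "(\<lambda>j. c * w j + d * (w j * a j)) sums (c * 1 + d * (\<Sum>j. w j * a j))"
    by (intro sums_add sums_mult summable_sums)
  then show ?thesis
    by (simp add: sums_iff algebra_simps)
qed

lemma continuous_map_weighted_term:
  assumes "continuous_map Y euclideanreal h"
  shows "continuous_map (seq_simplex_topology Y) euclideanreal (\<lambda>x. snd x j * h (fst x j))"
proof (rule continuous_map_real_mult)
  show "continuous_map (seq_simplex_topology Y) euclideanreal (\<lambda>x. snd x j)"
    by (rule continuous_map_compose[OF continuous_map_snd, unfolded o_def])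
       (intro continuous_intros, simp)
  show "continuous_map (seq_simplex_topology Y) euclideanreal (\<lambda>x. h (fst x j))"
    by (rule continuous_map_compose[OF continuous_map_fst, unfolded o_def])
       (rule continuous_map_compose[OF continuous_map_product_projection[where X="\<lambda>_. Y", OF UNIV_I]
                                        assms, unfolded o_def])
qed

lemma openin_less_weighted_suminf:
  assumes cont: "continuous_map Y euclideanreal h"
    and nonneg: "\<And>t. 0 \<le> h t" and bound: "\<And>t. h t \<le> B"
  shows "openin (seq_simplex_topology Y)
           {x \<in> topspace (seq_simplex_topology Y). a < (\<Sum>j. snd x j * h (fst x j))}"
proof (rule openin_less_suminf)
  show "continuous_map (seq_simplex_topology Y) euclideanreal (\<lambda>x. snd x j * h (fst x j))" for j
    using cont by (rule continuous_map_weighted_term)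
  fix x assume "x \<in> topspace (seq_simplex_topology Y)"
  then have w: "snd x \<in> simplex_inf" by auto
  then show "0 \<le> snd x j * h (fst x j)" for j
    using nonneg by (simp add: simplex_inf_def)
  have "\<bar>h t\<bar> \<le> B" for t using nonneg[of t] bound[of t] by simp
  from summable_abs_weighted[OF w this] show "summable (\<lambda>j. snd x j * h (fst x j))"
    by (rule summable_rabs_cancel)
qed

lemma continuous_map_weighted_suminf:
  assumes cont: "continuous_map Y euclideanreal \<phi>" and bound: "\<And>t. \<bar>\<phi> t\<bar> \<le> B"
  shows "continuous_map (seq_simplex_topology Y) euclideanreal (\<lambda>x. \<Sum>j. snd x j * \<phi> (fst x j))"
  unfolding continuous_map_upper_lower_semicontinuous_lt
proof (intro allI conjI)
  let ?X = "seq_simplex_topology Y"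
  let ?P = "\<lambda>x. \<Sum>j. snd x j * \<phi> (fst x j)"
  let ?Q = "\<lambda>d x. \<Sum>j. snd x j * (B + d * \<phi> (fst x j))"
  have Q_eq: "?Q d x = B + d * ?P x" if "x \<in> topspace ?X" for d x
  proof -
    have "snd x \<in> simplex_inf" using that by auto
    then show ?thesis using suminf_weighted_affine[of "snd x" "\<lambda>j. \<phi> (fst x j)" B B d] bound by simp
  qed
  have Q_open: "openin ?X {x \<in> topspace ?X. c < ?Q d x}" if "\<bar>d\<bar> = 1" for c d
  proof (rule openin_less_weighted_suminf)
    show "continuous_map Y euclideanreal (\<lambda>t. B + d * \<phi> t)"
      using cont by (intro continuous_intros)
    have abs_le: "\<bar>d * \<phi> t\<bar> \<le> B" for t
      using that bound[of t] by (simp add: abs_mult)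
    show "0 \<le> B + d * \<phi> t" "B + d * \<phi> t \<le> 2 * B" for t
      using abs_le[of t] by (auto simp: abs_le_iff)
  qed
  fix a
  have "{x \<in> topspace ?X. ?P x > a} = {x \<in> topspace ?X. B + a < ?Q 1 x}"
    using Q_eq[where d=1] by auto
  then show "openin ?X {x \<in> topspace ?X. ?P x > a}"
    using Q_open[of 1] by simp
  have "{x \<in> topspace ?X. ?P x < a} = {x \<in> topspace ?X. B - a < ?Q (-1) x}"
    using Q_eq[where d="-1"] by auto
  then show "openin ?X {x \<in> topspace ?X. ?P x < a}"
    using Q_open[of "-1"] by simp
qed

definition weight_measure :: "(nat \<Rightarrow> real) \<Rightarrow> nat measure" where
  "weight_measure w = density (count_space UNIV) (\<lambda>j. ennreal (w j))"

lemma prob_space_weight_measure: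
  assumes "w \<in> simplex_inf"
  shows "prob_space (weight_measure w)"
proof (rule prob_spaceI)
  have "emeasure (weight_measure w) (space (weight_measure w)) = (\<Sum>j. ennreal (w j))"
    by (simp add: weight_measure_def emeasure_density nn_integral_count_space_nat)
  also have "\<dots> = 1"
  proof -
    have "\<forall>j. 0 \<le> w j" "w sums 1" using assms by (auto simp: simplex_inf_def)
    then show ?thesis by (simp add: suminf_ennreal2 sums_summable sums_unique[symmetric])
  qed
  finally show "emeasure (weight_measure w) (space (weight_measure w)) = 1" .
qed

lemma measurable_weight_measure_subprob_algebra:
  assumes "\<And>j. M j \<in> prob_measures"
  shows "M \<in> weight_measure w \<rightarrow>\<^sub>M subprob_algebra borel"
  using assms by (auto simp: weight_measure_def space_subprob_algebra
                             prob_measures_def prob_space_imp_subprob_space)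

lemma mixture_eq_bind:
  assumes prob: "\<And>j. G (s j) \<in> prob_measures"
  shows "mixture G s w = weight_measure w \<bind> (\<lambda>j. G (s j))"
proof -
  let ?B = "weight_measure w \<bind> (\<lambda>j. G (s j))"
  have K: "(\<lambda>j. G (s j)) \<in> weight_measure w \<rightarrow>\<^sub>M subprob_algebra borel"
    using prob by (rule measurable_weight_measure_subprob_algebra)
  have nonempty: "space (weight_measure w) \<noteq> {}"
    by (simp add: weight_measure_def)
  have sets: "sets ?B = sets borel"
    using sets_bind_measurable[OF K nonempty] .
  then have "space ?B = UNIV"
    using sets_eq_imp_space_eq by force
  then have "?B = measure_of UNIV (sets borel) (emeasure ?B)"
    using measure_of_of_measure[of ?B] sets by simp
  also have "\<dots> = mixture G s w"
    unfolding mixture_def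
  proof (rule measure_of_eq)
    fix A :: "'a set" assume "A \<in> sigma_sets UNIV (sets borel)"
    then have A: "A \<in> sets borel"
      by (metis sets.sigma_sets_eq space_borel)
    have "emeasure ?B A = (\<integral>\<^sup>+j. emeasure (G (s j)) A \<partial>weight_measure w)"
      by (rule emeasure_bind[OF nonempty K A])
    also have "\<dots> = (\<Sum>j. ennreal (w j) * emeasure (G (s j)) A)"
      by (simp add: weight_measure_def nn_integral_density nn_integral_count_space_nat)
    finally show "emeasure ?B A = (\<Sum>j. ennreal (w j) * emeasure (G (s j)) A)" .
  qed simp
  finally show ?thesis ..
qed

lemma mixture_in_prob_measures:
  assumes prob: "\<And>j. G (s j) \<in> prob_measures" and w: "w \<in> simplex_inf"
  shows "mixture G s w \<in> prob_measures"
proof -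
  have N: "weight_measure w \<in> space (prob_algebra (count_space UNIV))"
    using prob_space_weight_measure[OF w] by (simp add: space_prob_algebra weight_measure_def)
  have K: "(\<lambda>j. G (s j)) \<in> count_space UNIV \<rightarrow>\<^sub>M prob_algebra borel"
    using prob by (auto simp: space_prob_algebra prob_measures_def)
  show ?thesis
    unfolding mixture_eq_bind[of G s w, OF prob] prob_measures_def
    using prob_space_bind'[OF N K] sets_bind'[OF N K] by simp
qed

lemma abs_integral_prob_measures_le:
  fixes f :: "'a::topological_space \<Rightarrow> real"
  assumes M: "M \<in> prob_measures" and f: "f \<in> borel_measurable borel" and bound: "\<And>x. \<bar>f x\<bar> \<le> B"
  shows "\<bar>\<integral>x. f x \<partial>M\<bar> \<le> B"
proof -
  interpret prob_space M
    using M by (simp add: prob_measures_def)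
  have "f \<in> borel_measurable M"
    using M f by (simp add: prob_measures_def cong: measurable_cong_sets)
  then have "integrable M (\<lambda>x. \<bar>f x\<bar>)"
    using bound by (intro integrable_const_bound[where B=B]) auto
  then have "(\<integral>x. \<bar>f x\<bar> \<partial>M) \<le> B"
    using bound by (intro integral_le_const) auto
  then show ?thesis
    using integral_abs_bound order_trans by blast
qed

lemma integral_mixture:
  fixes f :: "'a::topological_space \<Rightarrow> real"
  assumes prob: "\<And>j. G (s j) \<in> prob_measures" and w: "w \<in> simplex_inf"
    and f: "f \<in> borel_measurable borel" and bound: "\<And>x. \<bar>f x\<bar> \<le> B"
  shows "(\<integral>x. f x \<partial>mixture G s w) = (\<Sum>j. w j * (\<integral>x. f x \<partial>G (s j)))"
proof -
  interpret N: prob_space "weight_measure w"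
    using w by (rule prob_space_weight_measure)
  have K: "(\<lambda>j. G (s j)) \<in> weight_measure w \<rightarrow>\<^sub>M subprob_algebra borel"
    using prob by (rule measurable_weight_measure_subprob_algebra)
  have "(\<integral>x. f x \<partial>mixture G s w) = (\<integral>j. (\<integral>x. f x \<partial>G (s j)) \<partial>weight_measure w)"
    unfolding mixture_eq_bind[of G s w, OF prob]
  proof (rule integral_bind[OF f _ K, where B=B and B'=1])
    show "AE j in weight_measure w. emeasure (G (s j)) (space (G (s j))) \<le> ennreal 1"
      using prob by (simp add: prob_measures_def prob_space.emeasure_space_1)
  qed (use bound N.finite_measure_axioms in auto)
  also have "\<dots> = (\<integral>j. w j * (\<integral>x. f x \<partial>G (s j)) \<partial>count_space UNIV)"
    using w by (simp add: weight_measure_def integral_density simplex_inf_def)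
  also have "\<dots> = (\<Sum>j. w j * (\<integral>x. f x \<partial>G (s j)))"
    using summable_abs_weighted[OF w abs_integral_prob_measures_le[OF prob f bound]]
    by (simp add: integrable_count_space_nat_iff sums_integral_count_space_nat sums_unique)
  finally show ?thesis .
qed

lemma continuous_on_kernel_integral:
  fixes G :: "'a::{first_countable_topology, t2_space} \<Rightarrow> 'b::topological_space measure"
  assumes cont: "\<And>s xs. xs \<longlonglongrightarrow> s \<Longrightarrow> weak_conv_to (\<lambda>n. G (xs n)) (G s)"
    and f: "bcontinuous f"
  shows "continuous_on UNIV (\<lambda>t. \<integral>y. f y \<partial>G t)"
proof (rule continuous_on_sequentiallyI)
  fix xs :: "nat \<Rightarrow> 'a" and s assume "xs \<longlonglongrightarrow> s"
  then show "(\<lambda>n. \<integral>y. f y \<partial>G (xs n)) \<longlonglongrightarrow> (\<integral>y. f y \<partial>G s)"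
    using cont f unfolding weak_conv_to_def by blast
qed

lemma continuous_map_integral_mixture:
  fixes G :: "'a::{first_countable_topology, t2_space} \<Rightarrow> 'b::topological_space measure"
  assumes prob: "\<And>s. G s \<in> prob_measures"
    and cont: "\<And>s xs. xs \<longlonglongrightarrow> s \<Longrightarrow> weak_conv_to (\<lambda>n. G (xs n)) (G s)"
    and f: "bcontinuous f"
  shows "continuous_map (seq_simplex_topology euclidean) euclideanreal
           (\<lambda>x. \<integral>y. f y \<partial>mixture G (fst x) (snd x))"
proof -
  obtain B where bound: "\<And>y. \<bar>f y\<bar> \<le> B"
    using f by (auto simp: bcontinuous_def bounded_iff)
  have f_meas: "f \<in> borel_measurable borel"
    using f by (auto simp: bcontinuous_def intro: borel_measurable_continuous_onI)
  have "continuous_map (seq_simplex_topology euclidean) euclideanreal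
          (\<lambda>x. \<Sum>j. snd x j * (\<integral>y. f y \<partial>G (fst x j)))"
  proof (rule continuous_map_weighted_suminf)
    show "continuous_map euclidean euclideanreal (\<lambda>t. \<integral>y. f y \<partial>G t)"
      using continuous_on_kernel_integral[OF cont f] by simp
    show "\<bar>\<integral>y. f y \<partial>G t\<bar> \<le> B" for t
      using prob f_meas bound by (rule abs_integral_prob_measures_le)
  qed
  then show ?thesis
  proof (rule continuous_map_eq)
    fix x assume "x \<in> topspace (seq_simplex_topology (euclidean :: 'a topology))"
    then have "snd x \<in> simplex_inf" by auto
    then show "(\<Sum>j. snd x j * (\<integral>y. f y \<partial>G (fst x j))) = (\<integral>y. f y \<partial>mixture G (fst x) (snd x))"
      using integral_mixture[of G "fst x" "snd x", OF prob _ f_meas bound] by simp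
  qed
qed

theorem corollary7:
  fixes G :: "'a::polish_space \<Rightarrow> 'b::polish_space measure"
  assumes kernel: "G \<in> borel \<rightarrow>\<^sub>M subprob_algebra borel"
    and prob: "\<And>s. G s \<in> prob_measures"
    and cont: "\<And>s xs. xs \<longlonglongrightarrow> s \<Longrightarrow> weak_conv_to (\<lambda>n. G (xs n)) (G s)"
  shows "continuous_map
           (prod_topology (product_topology (\<lambda>_::nat. (euclidean :: 'a topology)) UNIV)
                          (subtopology (product_topology (\<lambda>_::nat. (euclidean :: real topology)) UNIV) simplex_inf))
           weak_topology
           (\<lambda>(s, w). mixture G s w)"
proof (rule continuous_map_weak_topologyI)
  fix x assume "x \<in> topspace (seq_simplex_topology (euclidean :: 'a topology))"
  then have "snd x \<in> simplex_inf" by auto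
  then show "(\<lambda>(s, w). mixture G s w) x \<in> prob_measures"
    using mixture_in_prob_measures[of G "fst x" "snd x", OF prob] by (simp add: case_prod_beta)
next
  fix f :: "'b \<Rightarrow> real" assume "bcontinuous f"
  from continuous_map_integral_mixture[OF prob cont this]
  show "continuous_map (seq_simplex_topology euclidean) euclideanreal
          (\<lambda>x. \<integral>y. f y \<partial>(\<lambda>(s, w). mixture G s w) x)"
    by (simp add: case_prod_beta)
qed

end
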